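(* The Monroe–Harsanyi–approval (MHA) and Monroe–Rawls–approval (MRA) rules fail the lower quota. Let $\mathcal C=\{c_1,\dots,c_8\}$, $S=7$, and $|\mathcal V|=10$, with - $B(\{c_1,c_2,c_3,c_4\})=6$; - $B(\{c_5\})=B(\{c_6\})=B(\{c_7\})=B(\{c_8\})=1$; - all other values of $B$ equal to $0$. With $\mathcal A=y_1=\{c_1,c_2,c_3,c_4\}$ and $q=\frac{6}{10}\cdot7$, one has $|\mathcal A|\ge\lfloor q\rfloor=4$. Nevertheless, every $\mathcal W\in\mathrm{MHA}(\sigma)$ and every $\mathcal W\in\mathrm{MRA}(\sigma)$ satisfies $|\mathcal W\cap\{c_1,c_2,c_3,c_4\}|=3<4$.
   Context: An approval-based multi-winner election is a tuple $\sigma=\langle \mathcal V,\mathcal C,S,B\rangle$, where $\mathcal V$ is a finite set of agents, $\mathcal C$ is a finite set of candidates, $1\le S\le|\mathcal C|$ is an integer, and $B:2^{\mathcal C}\to\mathbb N$ gives, for each $\mathcal A\subseteq\mathcal C$, the number $B(\mathcal A)$ of agents whose ballot is exactly $\mathcal A$. For $\mathcal W\subseteq\mathcal C$ with $|\mathcal W|=S$, the set $\mathfrak M_{\sigma,\mathcal W}$ of Monroe assignment functions consists of all $M:2^{\mathcal C}\times\mathcal W\to\mathbb N$ such that: - $\sum_{c\in\mathcal W}M(\mathcal A,c)=B(\mathcal A)$ for every $\mathcal A\subseteq\mathcal C$; - $\lfloor|\mathcal V|/S\rfloor\le\sum_{\mathcal A}M(\mathcal A,c)\le\lceil|\mathcal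 V|/S\rceil$ for every $c\in\mathcal W$. The MHA rule is $\mathrm{MHA}(\sigma)=\operatorname{argmin}_{\mathcal W\subseteq\mathcal C,|\mathcal W|=S}\min_{M\in\mathfrak M_{\sigma,\mathcal W}}\sum_{\mathcal A\subseteq\mathcal C}\sum_{c\in\mathcal W,c\notin\mathcal A}M(\mathcal A,c)$. For the MRA rule, let $\mathrm{MRA}_0(\sigma)$ be the set of $S$-subsets $\mathcal W$ for which some $M\in\mathfrak M_{\sigma,\mathcal W}$ has $\sum_{\mathcal A}\sum_{c\in\mathcal W,c\notin\mathcal A}M(\mathcal A,c)=0$. Then $\mathrm{MRA}(\sigma)=\mathrm{MRA}_0(\sigma)$ if this set is non-empty; otherwise $\mathrm{MRA}(\sigma)$ is the set of all $S$-subsets of $\mathcal C$. *)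

theory Defs
  imports Complex_Main
begin

text \<open>An approval election is given by the candidate set C, the committee size S and
  the ballot-count function B (B A = number of agents whose ballot is exactly A).\<close>

definition num_voters :: "'a set \<Rightarrow> ('a set \<Rightarrow> nat) \<Rightarrow> nat" where
  "num_voters C B = (\<Sum>A\<in>Pow C. B A)"

definition monroe_assignments ::
  "'a set \<Rightarrow> nat \<Rightarrow> ('a set \<Rightarrow> nat) \<Rightarrow> 'a set \<Rightarrow> ('a set \<Rightarrow> 'a \<Rightarrow> nat) set" where
  "monroe_assignments C S B W =
     {M. (\<forall>A\<in>Pow C. (\<Sum>c\<in>W. M A c) = B A) \<and>
         (\<forall>c\<in>W. \<lfloor>real (num_voters C B) / real S\<rfloor> \<le> int (\<Sum>A\<in>Pow C. M A c) \<and>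
                 int (\<Sum>A\<in>Pow C. M A c) \<le> \<lceil>real (num_voters C B) / real S\<rceil>)}"

text \<open>Number of agents assigned to a candidate they do not approve.\<close>
definition monroe_cost :: "'a set \<Rightarrow> 'a set \<Rightarrow> ('a set \<Rightarrow> 'a \<Rightarrow> nat) \<Rightarrow> nat" where
  "monroe_cost C W M = (\<Sum>A\<in>Pow C. \<Sum>c\<in>W - A. M A c)"

definition committees :: "'a set \<Rightarrow> nat \<Rightarrow> 'a set set" where
  "committees C S = {W. W \<subseteq> C \<and> card W = S}"

text \<open>Minimum over Monroe assignments of the cost of W (over naturals, the minimum is attained
  whenever the set of assignments is nonempty).\<close>
definition monroe_score :: "'a set \<Rightarrow> nat \<Rightarrow> ('a set \<Rightarrow> nat) \<Rightarrow> 'a set \<Rightarrow> nat" where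
  "monroe_score C S B W = (INF M\<in>monroe_assignments C S B W. monroe_cost C W M)"

definition MHA :: "'a set \<Rightarrow> nat \<Rightarrow> ('a set \<Rightarrow> nat) \<Rightarrow> 'a set set" where
  "MHA C S B = {W \<in> committees C S.
      monroe_assignments C S B W \<noteq> {} \<and>
      (\<forall>W'\<in>committees C S. monroe_assignments C S B W' \<noteq> {} \<longrightarrow>
          monroe_score C S B W \<le> monroe_score C S B W')}"

definition MRA0 :: "'a set \<Rightarrow> nat \<Rightarrow> ('a set \<Rightarrow> nat) \<Rightarrow> 'a set set" where
  "MRA0 C S B = {W \<in> committees C S.
      \<exists>M\<in>monroe_assignments C S B W. monroe_cost C W M = 0}"

definition MRA :: "'a set \<Rightarrow> nat \<Rightarrow> ('a set \<Rightarrow> nat) \<Rightarrow> 'a set set" where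
  "MRA C S B = (if MRA0 C S B \<noteq> {} then MRA0 C S B else committees C S)"

text \<open>The example: candidates c_i = i for i = 1..8.\<close>
definition ex_C :: "nat set" where "ex_C = {1..8}"

definition ex_B :: "nat set \<Rightarrow> nat" where
  "ex_B A = (if A = {1,2,3,4} then 6
             else if A = {5} \<or> A = {6} \<or> A = {7} \<or> A = {8} then 1 else 0)"

end

theory Submission
  imports Defs
begin

text \<open>The four voters with singleton ballots {5},...,{8} can only be represented at zero cost
  if all of 5,...,8 are elected. The committee {2,...,8}, with the six voters approving
  {1,2,3,4} split two by two among 2, 3, 4, does represent everybody at zero cost, so both
  rules select exactly the zero-cost committees, and each of these omits one of 1,...,4.\<close>

lemma ballot_le_monroe_cost:
  assumes "finite C" "A \<in> Pow C" "W \<inter> A = {}"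
    and "M \<in> monroe_assignments C S B W"
  shows "B A \<le> monroe_cost C W M"
proof -
  have "B A = (\<Sum>c\<in>W - A. M A c)"
    using assms(2-4) by (simp add: monroe_assignments_def Diff_triv)
  also have "\<dots> \<le> monroe_cost C W M"
    unfolding monroe_cost_def
    by (rule member_le_sum[where f = "\<lambda>A. \<Sum>c\<in>W - A. M A c"]) (use assms in auto)
  finally show ?thesis .
qed

lemma monroe_score_in_costs:
  assumes "monroe_assignments C S B W \<noteq> {}"
  shows "\<exists>M\<in>monroe_assignments C S B W. monroe_cost C W M = monroe_score C S B W"
  using Inf_nat_def1[of "monroe_cost C W ` monroe_assignments C S B W"] assms
  by (force simp: monroe_score_def)

lemma MHA_eq_MRA0:
  assumes "MRA0 C S B \<noteq> {}"
  shows "MHA C S B = MRA0 C S B"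
proof -
  have score_zero: "monroe_score C S B W = 0"
    if "W \<in> committees C S" "M \<in> monroe_assignments C S B W" "monroe_cost C W M = 0" for W M
    using that unfolding monroe_score_def by (metis cINF_lower bdd_below_bot le_zero_eq)
  obtain W0 M0 where W0: "W0 \<in> committees C S" "M0 \<in> monroe_assignments C S B W0"
    "monroe_cost C W0 M0 = 0"
    using assms unfolding MRA0_def by blast
  show ?thesis
  proof (intro set_eqI iffI)
    fix W assume W: "W \<in> MHA C S B"
    then have "monroe_score C S B W = 0"
      using W0 score_zero[OF W0] unfolding MHA_def by fastforce
    with W show "W \<in> MRA0 C S B"
      using monroe_score_in_costs unfolding MHA_def MRA0_def by fastforce
  next
    fix W assume "W \<in> MRA0 C S B"
    then show "W \<in> MHA C S B"
      unfolding MHA_def MRA0_def using score_zero by fastforce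
  qed
qed

lemma MRA_eq_MRA0: "MRA0 C S B \<noteq> {} \<Longrightarrow> MRA C S B = MRA0 C S B"
  by (simp add: MRA_def)

lemma ex_num_voters: "num_voters ex_C ex_B = 10"
proof -
  have "(\<Sum>A\<in>Pow ex_C. ex_B A) = (\<Sum>A\<in>{{1,2,3,4},{5},{6},{7},{8}}. ex_B A)"
    by (rule sum.mono_neutral_right) (auto simp: ex_C_def ex_B_def)
  then show ?thesis
    by (simp add: num_voters_def ex_B_def)
qed

lemma ex_monroe_assignments_iff:
  "M \<in> monroe_assignments ex_C 7 ex_B W \<longleftrightarrow>
     (\<forall>A\<in>Pow ex_C. (\<Sum>c\<in>W. M A c) = ex_B A) \<and>
     (\<forall>c\<in>W. (\<Sum>A\<in>Pow ex_C. M A c) \<in> {1, 2})"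
proof -
  have "\<lfloor>real (num_voters ex_C ex_B) / real (7::nat)\<rfloor> = 1"
    "\<lceil>real (num_voters ex_C ex_B) / real (7::nat)\<rceil> = 2"
    by (simp_all add: ex_num_voters floor_eq_iff ceiling_eq_iff)
  moreover have "1 \<le> int n \<and> int n \<le> 2 \<longleftrightarrow> n \<in> {1, 2}" for n
    by auto
  ultimately show ?thesis
    by (simp only: monroe_assignments_def mem_Collect_eq)
qed

definition ex_W :: "nat set" where "ex_W = {2,3,4,5,6,7,8}"

definition ex_M :: "nat set \<Rightarrow> nat \<Rightarrow> nat" where
  "ex_M A c = (if c \<in> {2,3,4} \<and> A = {1,2,3,4} then 2
     else if c \<in> {5..8} \<and> A = {c} then 1 else 0)"

lemma ex_M_in_monroe_assignments: "ex_M \<in> monroe_assignments ex_C 7 ex_B ex_W"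
  unfolding ex_monroe_assignments_iff
proof (intro conjI ballI)
  fix A show "(\<Sum>c\<in>ex_W. ex_M A c) = ex_B A"
    by (auto simp: ex_W_def ex_M_def ex_B_def)
next
  fix c assume "c \<in> ex_W"
  then consider "c \<in> {2,3,4}" | "c \<in> {5..8}"
    by (auto simp: ex_W_def)
  then show "(\<Sum>A\<in>Pow ex_C. ex_M A c) \<in> {1, 2}"
  proof cases
    case 1
    then have "(\<Sum>A\<in>Pow ex_C. ex_M A c) = (\<Sum>A\<in>Pow ex_C. if A = {1,2,3,4} then 2 else 0)"
      by (intro sum.cong) (auto simp: ex_M_def)
    then show ?thesis
      by (simp add: ex_C_def)
  next
    case 2
    then have "(\<Sum>A\<in>Pow ex_C. ex_M A c) = (\<Sum>A\<in>Pow ex_C. if A = {c} then 1 else 0)"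
      by (intro sum.cong) (auto simp: ex_M_def)
    with 2 show ?thesis
      by (simp add: ex_C_def)
  qed
qed

lemma ex_MRA0_nonempty: "MRA0 ex_C 7 ex_B \<noteq> {}"
proof -
  have "ex_W \<in> committees ex_C 7"
    by (simp add: committees_def ex_W_def ex_C_def)
  moreover have "monroe_cost ex_C ex_W ex_M = 0"
    unfolding monroe_cost_def by (intro sum.neutral ballI) (auto simp: ex_M_def ex_W_def)
  ultimately show ?thesis
    unfolding MRA0_def using ex_M_in_monroe_assignments by blast
qed

lemma ex_MRA0_card_Int_1234:
  assumes "W \<in> MRA0 ex_C 7 ex_B"
  shows "card (W \<inter> {1,2,3,4}) = 3"
proof -
  obtain M where W: "W \<subseteq> ex_C" "card W = 7" "M \<in> monroe_assignments ex_C 7 ex_B W"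
    "monroe_cost ex_C W M = 0"
    using assms unfolding MRA0_def committees_def by blast
  have "k \<in> W" if "k \<in> {5..8}" for k
  proof (rule ccontr)
    assume "k \<notin> W"
    then have "ex_B {k} \<le> monroe_cost ex_C W M"
      using that W(3)
      by (intro ballot_le_monroe_cost) (auto simp: ex_C_def)
    moreover have "ex_B {k} = 1"
      using that by (auto simp: ex_B_def)
    ultimately show False
      using W(4) by simp
  qed
  then have "W = (W \<inter> {1,2,3,4}) \<union> {5..8}"
    using W(1) by (auto simp: ex_C_def)
  then have "card W = card ((W \<inter> {1,2,3,4}) \<union> {5..8})"
    by (rule arg_cong)
  also have "\<dots> = card (W \<inter> {1,2,3,4}) + card {5..8::nat}"
    by (rule card_Un_disjoint) auto
  finally show ?thesis
    using W(2) by simp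
qed

theorem theorem13:
  shows "num_voters ex_C ex_B = 10
    \<and> card {1::nat,2,3,4} \<ge> nat \<lfloor>(6 / 10) * (7::real)\<rfloor>
    \<and> \<lfloor>(6 / 10) * (7::real)\<rfloor> = 4
    \<and> (\<forall>W\<in>MHA ex_C 7 ex_B. card (W \<inter> {1,2,3,4}) = 3)
    \<and> (\<forall>W\<in>MRA ex_C 7 ex_B. card (W \<inter> {1,2,3,4}) = 3)"
proof -
  have "\<lfloor>(6 / 10) * (7::real)\<rfloor> = 4"
    by (simp add: floor_eq_iff)
  moreover have "MHA ex_C 7 ex_B = MRA0 ex_C 7 ex_B" "MRA ex_C 7 ex_B = MRA0 ex_C 7 ex_B"
    using ex_MRA0_nonempty by (simp_all add: MHA_eq_MRA0 MRA_eq_MRA0)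
  ultimately show ?thesis
    using ex_num_voters ex_MRA0_card_Int_1234 by simp
qed

end
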